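(* Let $\lambda=\lambda_0\lambda_1\lambda_2\cdots$ be Levin's number, regarded as the real number with binary expansion $0.\lambda_0\lambda_1\lambda_2\ldots$, and let $x_n=\{2^n\lambda\}$ for $n\ge1$. For every $d\ge 1$, with $e=2^d$ and $N=2^{e+d+1}$, the pair correlation function of $(x_n)_{n\ge1}$ satisfies $$F_N(2)\ \ge\ \frac{(e-d+1)(e-d)}{8e}.$$ In particular $F_N(2)\to\infty$ along $N=2^{2^d+d+1}$ as $d\to\infty$, so $(\{2^n\lambda\})_{n\ge1}$ does not have Poissonian pair correlations.
   Context: Over $\mathbb{F}_2$, $M_0=(1)$ and $M_{d+1}=\begin{pmatrix} M_d & M_d\\ 0 & M_d\end{pmatrix}$, so $M_d$ is $e\times e$ with $e=2^d$. $w_0,\dots,w_{2^e-1}$ are all vectors of $\mathbb{F}_2^e$ in increasing lexicographic order. Binary words and vectors are identified. $\lambda_d=(M_dw_0)(M_dw_1)\cdots(M_dw_{2^e-1})$ and Levin's number is $\lambda=\lambda_0\lambda_1\lambda_2\cdots$. For real $x$, $\{x\}=x-\lfloor x\rfloor$ and $\Vert x\Vert$ is the distance to the nearest integer. $F_N(s)=\frac1N\#\{(i,j):1\le i\ne j\le N,\ \Vert x_i-x_j\Vert<s/N\}$; a sequence has Poissonian pair correlations if $\lim_{N\to\infty}F_N(s)=2s$ for every $s\ge0$. *)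

theory Defs
  imports Complex_Main
begin

text \<open>The matrix M_d over F_2 (entries as booleans, indices 0-based, i, j < 2^d):
  M_0 = (1), M_{d+1} = [[M_d, M_d], [0, M_d]].\<close>
fun levinM :: "nat \<Rightarrow> nat \<Rightarrow> nat \<Rightarrow> bool" where
  "levinM 0 i j = True"
| "levinM (Suc d) i j =
     (if i < 2 ^ d then levinM d i (if j < 2 ^ d then j else j - 2 ^ d)
      else (2 ^ d \<le> j \<and> levinM d (i - 2 ^ d) (j - 2 ^ d)))"

text \<open>w_k: the k-th vector of F_2^e in increasing lexicographic order
  (component t, 0-based from the left, is binary digit e-1-t of k).\<close>
definition lexvec :: "nat \<Rightarrow> nat \<Rightarrow> nat \<Rightarrow> bool" where
  "lexvec e k t = odd (k div 2 ^ (e - 1 - t))"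

definition levinMw :: "nat \<Rightarrow> nat \<Rightarrow> nat \<Rightarrow> bool" where
  "levinMw d k i = odd (card {j. j < 2 ^ d \<and> levinM d i j \<and> lexvec (2 ^ d) k j})"

definition levin_word :: "nat \<Rightarrow> bool list" where
  "levin_word d = concat (map (\<lambda>k. map (levinMw d k) [0..<2 ^ d]) [0..<2 ^ (2 ^ d)])"

text \<open>The p-th binary digit (0-based) of lambda_0 lambda_1 lambda_2 ...; every block is
  nonempty, so the first p+1 blocks contain position p.\<close>
definition levin_bit :: "nat \<Rightarrow> bool" where
  "levin_bit p = concat (map levin_word [0..<Suc p]) ! p"

definition levin :: real where
  "levin = (\<Sum>p. (if levin_bit p then 1 else 0) / 2 ^ (p + 1))"

definition frac_part :: "real \<Rightarrow> real" where
  "frac_part x = x - of_int \<lfloor>x\<rfloor>"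

definition dist_int :: "real \<Rightarrow> real" where
  "dist_int x = \<bar>x - of_int (round x)\<bar>"

definition pair_corr :: "(nat \<Rightarrow> real) \<Rightarrow> nat \<Rightarrow> real \<Rightarrow> real" where
  "pair_corr x N s = real (card {(i, j). i \<in> {1..N} \<and> j \<in> {1..N} \<and> i \<noteq> j \<and>
       dist_int (x i - x j) < s / real N}) / real N"

definition poissonian_pc :: "(nat \<Rightarrow> real) \<Rightarrow> bool" where
  "poissonian_pc x \<longleftrightarrow> (\<forall>s\<ge>0. (\<lambda>N. pair_corr x N s) \<longlonglongrightarrow> 2 * s)"

end

(*
  Write e = 2^d.  For k < 2^(e-2) the vector w_k of F_2^(2e) vanishes outside its last e - 2
  coordinates, so the k-th block of lambda_(d+1) is the word M_d w_k written twice, where now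
  w_k vanishes in its first two coordinates.  Every column of M_d other than the first two has
  an even number of ones in the even rows and in the odd rows; hence both parity classes of
  coordinates of M_d w_k have even weight.  A window of length e + d starting in the first half
  of such a block is a rotation of M_d w_k followed by a periodic continuation, so its first two
  bits are determined by the next e - 2 bits, and with them the whole window.  There are
  2^(e-2) (e - d + 1) such windows but only 2^(e-2) possible patterns, so by Cauchy-Schwarz about
  2^(e-2) (e - d)^2 ordered pairs of distinct windows agree.  Two positions a, b at which lambda
  agrees for e + d bits satisfy ||x_a - x_b|| < 2^(-(e+d)) = 2/N, which gives the bound on F_N(2);
  it grows linearly in d, which rules out Poissonian pair correlations.
*)

theory Submission
  imports Defs "HOL-Analysis.Convex"
begin

section \<open>Binary expansions\<close>

definition bin_value :: "(nat \<Rightarrow> bool) \<Rightarrow> real" where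
  "bin_value b = (\<Sum>p. of_bool (b p) / 2 ^ Suc p)"

lemma summable_bin_value: "summable (\<lambda>p. of_bool (b p) / (2::real) ^ Suc p)"
  by (rule summable_comparison_test[OF _ summable_geometric[of "1/2"]])
     (auto simp: field_simps intro!: exI[of _ 0])

lemma bin_value_unfold: "bin_value b = (of_bool (b 0) + bin_value (\<lambda>p. b (Suc p))) / 2"
  unfolding bin_value_def
  using suminf_split_head[OF summable_bin_value[of b]] suminf_divide[OF summable_bin_value, of "\<lambda>p. b (Suc p)" 2]
  by (simp add: field_simps)

lemma bin_value_nonneg: "0 \<le> bin_value b"
  unfolding bin_value_def by (rule suminf_nonneg[OF summable_bin_value]) simp

lemma bin_value_le_1: "bin_value b \<le> 1"
proof -
  have "bin_value b \<le> (\<Sum>p. (1/2::real) ^ Suc p)"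
    unfolding bin_value_def
    by (rule suminf_le[OF _ summable_bin_value sums_summable[OF power_half_series]])
       (simp add: power_divide)
  also have "\<dots> = 1"
    using sums_unique[OF power_half_series] by simp
  finally show ?thesis .
qed

lemma bin_value_pos: "b p \<Longrightarrow> 0 < bin_value b"
proof (induction p arbitrary: b)
  case 0
  then show ?case using bin_value_unfold[of b] bin_value_nonneg[of "\<lambda>p. b (Suc p)"] by simp
next
  case (Suc p)
  have "0 < bin_value (\<lambda>p. b (Suc p))"
    by (rule Suc.IH) (use Suc.prems in simp)
  then show ?case using bin_value_unfold[of b] by (cases "b 0") simp_all
qed

lemma bin_value_less_1: "\<not> b p \<Longrightarrow> bin_value b < 1"
proof (induction p arbitrary: b)
  case 0
  then show ?case using bin_value_unfold[of b] bin_value_le_1[of "\<lambda>p. b (Suc p)"] by simp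
next
  case (Suc p)
  have "bin_value (\<lambda>p. b (Suc p)) < 1"
    by (rule Suc.IH) (use Suc.prems in simp)
  then show ?case using bin_value_unfold[of b] by (cases "b 0") simp_all
qed

lemma power2_mult_bin_value: "\<exists>z::int. 2 ^ n * bin_value b = of_int z + bin_value (\<lambda>p. b (n + p))"
proof (induction n)
  case (Suc n)
  then obtain z :: int where "2 ^ n * bin_value b = of_int z + bin_value (\<lambda>p. b (n + p))" ..
  then have "2 ^ Suc n * bin_value b = of_int (2 * z + of_bool (b n)) + bin_value (\<lambda>p. b (Suc n + p))"
    using bin_value_unfold[of "\<lambda>p. b (n + p)"] by (simp add: algebra_simps)
  then show ?case ..
qed simp

lemma bin_value_shift_strict_bounds:
  assumes "\<forall>m. \<exists>p\<ge>m. b p" and "\<forall>m. \<exists>p\<ge>m. \<not> b p"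
  shows "0 < bin_value (\<lambda>p. b (n + p))" and "bin_value (\<lambda>p. b (n + p)) < 1"
proof -
  obtain p q where "b (n + p)" "\<not> b (n + q)"
    using assms[rule_format, of n] by (metis le_add_diff_inverse)
  then show "0 < bin_value (\<lambda>p. b (n + p))" "bin_value (\<lambda>p. b (n + p)) < 1"
    by (auto intro: bin_value_pos bin_value_less_1)
qed

lemma frac_part_power2_mult_bin_value:
  assumes "\<forall>m. \<exists>p\<ge>m. b p" and "\<forall>m. \<exists>p\<ge>m. \<not> b p"
  shows "frac_part (2 ^ n * bin_value b) = bin_value (\<lambda>p. b (n + p))"
proof -
  obtain z :: int where z: "2 ^ n * bin_value b = of_int z + bin_value (\<lambda>p. b (n + p))"
    using power2_mult_bin_value ..
  then have "\<lfloor>2 ^ n * bin_value b\<rfloor> = z"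
    using bin_value_shift_strict_bounds[OF assms, of n] by linarith
  then show ?thesis
    unfolding frac_part_def using z by simp
qed

lemma bin_value_diff_eq_if_prefix:
  assumes "\<forall>q<m. b q = c q"
  shows "bin_value b - bin_value c = (bin_value (\<lambda>p. b (m + p)) - bin_value (\<lambda>p. c (m + p))) / 2 ^ m"
  using assms
proof (induction m arbitrary: b c)
  case (Suc m)
  have "bin_value b - bin_value c = (bin_value (\<lambda>p. b (Suc p)) - bin_value (\<lambda>p. c (Suc p))) / 2"
    using bin_value_unfold[of b] bin_value_unfold[of c] Suc.prems by (simp add: diff_divide_distrib)
  also have "bin_value (\<lambda>p. b (Suc p)) - bin_value (\<lambda>p. c (Suc p))
      = (bin_value (\<lambda>p. b (Suc (m + p))) - bin_value (\<lambda>p. c (Suc (m + p)))) / 2 ^ m"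
    using Suc.IH[of "\<lambda>p. b (Suc p)" "\<lambda>p. c (Suc p)"] Suc.prems by simp
  finally show ?case by simp
qed simp

lemma dist_int_le_abs: "dist_int x \<le> \<bar>x\<bar>"
  unfolding dist_int_def using round_diff_minimal[of x 0] by simp

lemma dist_int_frac_part_less_if_prefix:
  assumes "\<forall>m. \<exists>p\<ge>m. b p" and "\<forall>m. \<exists>p\<ge>m. \<not> b p"
    and "\<forall>q<m. b (i + q) = b (j + q)"
  shows "dist_int (frac_part (2 ^ i * bin_value b) - frac_part (2 ^ j * bin_value b)) < 1 / 2 ^ m"
proof -
  let ?tail = "\<lambda>n. bin_value (\<lambda>p. b (n + p))"
  have "frac_part (2 ^ i * bin_value b) - frac_part (2 ^ j * bin_value b) = ?tail i - ?tail j"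
    using frac_part_power2_mult_bin_value[OF assms(1,2)] by simp
  also have "\<dots> = (?tail (i + m) - ?tail (j + m)) / 2 ^ m"
    using bin_value_diff_eq_if_prefix[of m "\<lambda>p. b (i + p)" "\<lambda>p. b (j + p)"] assms(3)
    by (simp add: add.assoc)
  finally have "dist_int (frac_part (2 ^ i * bin_value b) - frac_part (2 ^ j * bin_value b))
      \<le> \<bar>?tail (i + m) - ?tail (j + m)\<bar> / 2 ^ m"
    using dist_int_le_abs by (metis abs_divide power_abs abs_numeral)
  also have "\<dots> < 1 / 2 ^ m"
    using bin_value_shift_strict_bounds[OF assms(1,2), of "i + m"]
      bin_value_shift_strict_bounds[OF assms(1,2), of "j + m"]
    by (intro divide_strict_right_mono) auto
  finally show ?thesis .
qed

section \<open>The blocks of Levin's word\<close>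

lemma nth_concat_equal_length:
  assumes "\<forall>ys\<in>set xss. length ys = e" and "k < length xss" and "i < e"
  shows "concat xss ! (e * k + i) = xss ! k ! i"
  using assms
proof (induction xss arbitrary: k)
  case (Cons ys xss)
  show ?case
  proof (cases k)
    case (Suc k')
    have "e * k + i = e + (e * k' + i)" using Suc by simp
    then show ?thesis using Cons Suc by (simp add: nth_append)
  qed (use Cons.prems in \<open>simp add: nth_append\<close>)
qed simp

definition levin_block_start :: "nat \<Rightarrow> nat" where
  "levin_block_start d = (\<Sum>j<d. 2 ^ j * 2 ^ 2 ^ j)"

lemma length_levin_word: "length (levin_word d) = 2 ^ d * 2 ^ 2 ^ d"
  unfolding levin_word_def by (simp add: length_concat o_def sum_list_triv)

lemma length_concat_levin_words: "length (concat (map levin_word [0..<d])) = levin_block_start d"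
  by (induction d) (simp_all add: levin_block_start_def length_levin_word)

lemma le_levin_block_start: "d \<le> levin_block_start d"
proof -
  have "d = (\<Sum>j<d. 1)" by simp
  also have "\<dots> \<le> levin_block_start d"
    unfolding levin_block_start_def by (intro sum_mono) simp
  finally show ?thesis .
qed

lemma double_levin_block_start_le: "2 * levin_block_start d \<le> 2 ^ d * 2 ^ 2 ^ d"
proof (induction d)
  case (Suc d)
  let ?L = "2 ^ d * 2 ^ 2 ^ d :: nat"
  have "(2::nat) ^ 2 ^ Suc d = 2 ^ 2 ^ d * 2 ^ 2 ^ d"
    by (simp add: mult_2 power_add)
  then have "2 ^ Suc d * 2 ^ 2 ^ Suc d = 2 * ?L * 2 ^ 2 ^ d"
    by simp
  moreover have "2 * ?L * 2 \<le> 2 * ?L * 2 ^ 2 ^ d"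
    using power_increasing[of 1 "2 ^ d" "2::nat"] by (intro mult_le_mono2) simp
  moreover have "levin_block_start (Suc d) = levin_block_start d + ?L"
    by (simp add: levin_block_start_def)
  ultimately show ?case
    using Suc.IH by linarith
qed (simp add: levin_block_start_def)

lemma levin_bit_eq_nth_levin_word:
  assumes "r < length (levin_word d)"
  shows "levin_bit (levin_block_start d + r) = levin_word d ! r"
proof -
  let ?n = "Suc (levin_block_start d + r)"
  have "d < ?n"
    using le_levin_block_start[of d] by simp
  then have "[0..<?n] = [0..<d] @ d # [Suc d..<?n]"
    using upt_add_eq_append[of 0 d "?n - d"] by (simp add: upt_conv_Cons)
  then show ?thesis
    unfolding levin_bit_def using assms by (simp add: nth_append length_concat_levin_words)
qed

lemma levin_bit_eq_levinMw:
  assumes "k < 2 ^ 2 ^ d" and "i < 2 ^ d"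
  shows "levin_bit (levin_block_start d + 2 ^ d * k + i) = levinMw d k i"
proof -
  have "2 ^ d * k + i < 2 ^ d * (k + 1)" using assms(2) by simp
  also have "\<dots> \<le> 2 ^ d * 2 ^ 2 ^ d" using assms(1) by (intro mult_le_mono2) simp
  finally have "2 ^ d * k + i < length (levin_word d)" by (simp add: length_levin_word)
  then have "levin_bit (levin_block_start d + 2 ^ d * k + i) = levin_word d ! (2 ^ d * k + i)"
    by (simp add: levin_bit_eq_nth_levin_word add.assoc)
  also have "\<dots> = levinMw d k i"
    unfolding levin_word_def using assms by (subst nth_concat_equal_length) auto
  finally show ?thesis .
qed

lemma levin_eq_bin_value: "levin = bin_value levin_bit"
  unfolding levin_def bin_value_def by (simp add: of_bool_def)

section \<open>Column parities of Levin's matrices\<close>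

lemma card_Collect_less_double:
  fixes h :: nat
  shows "card {i. i < 2 * h \<and> P i} = card {i. i < h \<and> P i} + card {i. i < h \<and> P (i + h)}"
proof -
  have "i \<in> (\<lambda>i. i + h) ` {i. i < h \<and> P (i + h)}" if "h \<le> i" "i < 2 * h" "P i" for i
    using that by (intro image_eqI[of _ _ "i - h"]) auto
  then have "{i. i < 2 * h \<and> P i} = {i. i < h \<and> P i} \<union> (\<lambda>i. i + h) ` {i. i < h \<and> P (i + h)}"
    by (auto simp: not_less) (meson not_less)
  moreover have "card ((\<lambda>i. i + h) ` {i. i < h \<and> P (i + h)}) = card {i. i < h \<and> P (i + h)}"
    by (rule card_image) (simp add: inj_on_def)
  moreover have "{i. i < h \<and> P i} \<inter> (\<lambda>i. i + h) ` {i. i < h \<and> P (i + h)} = {}"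
    by auto
  ultimately show ?thesis
    by (simp add: card_Un_disjoint)
qed

lemma levinM_first_row: "levinM d 0 j"
  by (induction d arbitrary: j) auto

lemma lexvec_double_low:
  assumes "k < 2 ^ h" and "t < h"
  shows "\<not> lexvec (2 * h) k t"
proof -
  have "(2::nat) ^ h \<le> 2 ^ (2 * h - 1 - t)"
    using assms(2) by (intro power_increasing) auto
  then have "k < 2 ^ (2 * h - 1 - t)"
    using assms(1) by linarith
  then show ?thesis
    unfolding lexvec_def by simp
qed

lemma lexvec_double_high: "t < h \<Longrightarrow> lexvec (2 * h) k (t + h) = lexvec h k t"
  unfolding lexvec_def by (simp add: numeral_2_eq_2)

lemma levinMw_Suc:
  assumes "k < 2 ^ 2 ^ d" and "j < 2 ^ Suc d"
  shows "levinMw (Suc d) k j = levinMw d k (j mod 2 ^ d)"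
proof -
  let ?h = "2 ^ d :: nat"
  have "{t. t < 2 ^ Suc d \<and> levinM (Suc d) j t \<and> lexvec (2 ^ Suc d) k t}
      = {t. t < 2 * ?h \<and> levinM (Suc d) j t \<and> lexvec (2 * ?h) k t}"
    by simp
  moreover have "{t. t < ?h \<and> levinM (Suc d) j t \<and> lexvec (2 * ?h) k t} = {}"
    using lexvec_double_low[OF assms(1)] by blast
  moreover have "{t. t < ?h \<and> levinM (Suc d) j (t + ?h) \<and> lexvec (2 * ?h) k (t + ?h)}
      = {t. t < ?h \<and> levinM d (j mod ?h) t \<and> lexvec ?h k t}"
    using assms(2) by (cases "j < ?h") (auto simp: lexvec_double_high le_mod_geq)
  ultimately show ?thesis
    unfolding levinMw_def by (simp only: card_Collect_less_double) simp
qed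

lemma odd_card_column_levinM_iff:
  assumes "j < 2 ^ d"
  shows "odd (card {i. i < 2 ^ d \<and> levinM d i j}) \<longleftrightarrow> j = 0"
  using assms
proof (induction d arbitrary: j)
  case (Suc d)
  let ?h = "2 ^ d :: nat"
  have split: "card {i. i < 2 ^ Suc d \<and> levinM (Suc d) i j}
      = card {i. i < ?h \<and> levinM (Suc d) i j} + card {i. i < ?h \<and> levinM (Suc d) (i + ?h) j}"
    using card_Collect_less_double[of ?h] by simp
  show ?case
  proof (cases "j < ?h")
    case True
    then have "{i. i < ?h \<and> levinM (Suc d) i j} = {i. i < ?h \<and> levinM d i j}"
      and "{i. i < ?h \<and> levinM (Suc d) (i + ?h) j} = {}"
      by auto
    then show ?thesis
      using split Suc.IH[OF True] by (simp only: card.empty add_0_right)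
  next
    case False
    then have "{i. i < ?h \<and> levinM (Suc d) (i + ?h) j} = {i. i < ?h \<and> levinM (Suc d) i j}"
      by auto
    moreover have "j \<noteq> 0"
      using False by (intro notI) simp
    ultimately show ?thesis
      using split by (simp del: levinM.simps)
  qed
qed simp

lemma odd_card_odd_rows_column_levinM_iff:
  assumes "1 \<le> d" and "j < 2 ^ d"
  shows "odd (card {i. i < 2 ^ d \<and> odd i \<and> levinM d i j}) \<longleftrightarrow> j = 1"
  using assms
proof (induction d arbitrary: j)
  case (Suc d)
  let ?h = "2 ^ d :: nat"
  show ?case
  proof (cases "d = 0")
    case True
    then have "{i. i < 2 \<and> odd i \<and> levinM 1 i j} = (if j = 1 then {1} else {})"
      using Suc.prems by (auto simp: less_2_cases_iff)
    then show ?thesis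
      using True by simp
  next
    case False
    then have "even ?h" by simp
    then have split: "card {i. i < 2 ^ Suc d \<and> odd i \<and> levinM (Suc d) i j}
        = card {i. i < ?h \<and> odd i \<and> levinM (Suc d) i j}
          + card {i. i < ?h \<and> odd i \<and> levinM (Suc d) (i + ?h) j}"
      using card_Collect_less_double[of ?h] by simp
    show ?thesis
    proof (cases "j < ?h")
      case True
      then have "{i. i < ?h \<and> odd i \<and> levinM (Suc d) i j} = {i. i < ?h \<and> odd i \<and> levinM d i j}"
        and "{i. i < ?h \<and> odd i \<and> levinM (Suc d) (i + ?h) j} = {}"
        by auto
      then show ?thesis
        using split Suc.IH[OF _ True] False by (simp only: card.empty add_0_right)
    next
      case False
      then have "{i. i < ?h \<and> odd i \<and> levinM (Suc d) (i + ?h) j}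
          = {i. i < ?h \<and> odd i \<and> levinM (Suc d) i j}"
        using \<open>even ?h\<close> by auto
      moreover have "2 \<le> ?h"
        using \<open>d \<noteq> 0\<close> by (cases d) auto
      ultimately show ?thesis
        using split False by (simp del: levinM.simps)
    qed
  qed
qed simp

lemma even_card_parity_class_column_levinM:
  assumes "1 \<le> d" and "2 \<le> j" and "j < 2 ^ d"
  shows "even (card {i. i < 2 ^ d \<and> i mod 2 = c \<and> levinM d i j})"
proof -
  let ?col = "\<lambda>P. card {i. i < 2 ^ d \<and> P i \<and> levinM d i j}"
  have "?col (\<lambda>_. True) = ?col even + ?col odd"
    by (subst card_Un_disjoint[symmetric]) (auto intro: arg_cong[where f = card])
  moreover have "even (?col (\<lambda>_. True))" "even (?col odd)"
    using odd_card_column_levinM_iff[OF assms(3)] odd_card_odd_rows_column_levinM_iff[OF assms(1,3)]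
      assms(2) by auto
  ultimately have "even (?col even)" "even (?col odd)"
    by auto
  moreover have "{i. i < 2 ^ d \<and> i mod 2 = c \<and> levinM d i j}
      = (if c = 0 then {i. i < 2 ^ d \<and> even i \<and> levinM d i j}
         else if c = 1 then {i. i < 2 ^ d \<and> odd i \<and> levinM d i j} else {})"
    by (auto simp: even_iff_mod_2_eq_zero odd_iff_mod_2_eq_one)
  ultimately show ?thesis
    by simp
qed

lemma even_card_parity_class_levinMw:
  assumes "1 \<le> d" and "k < 2 ^ (2 ^ d - 2)"
  shows "even (card {t. t < 2 ^ d \<and> t mod 2 = c \<and> levinMw d k t})"
proof -
  let ?e = "2 ^ d :: nat"
  define A where "A = {t. t < ?e \<and> t mod 2 = c}"
  have "\<not> lexvec ?e k j" if "j < 2" for j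
  proof -
    have "(2::nat) ^ (?e - 2) \<le> 2 ^ (?e - 1 - j)"
      using that by (intro power_increasing) auto
    then have "k < 2 ^ (?e - 1 - j)"
      using assms(2) by linarith
    then show ?thesis
      unfolding lexvec_def by simp
  qed
  then have column_even: "even (\<Sum>t\<in>A. of_bool (levinM d t j \<and> lexvec ?e k j) :: nat)" if "j < ?e" for j
  proof (cases "lexvec ?e k j")
    case True
    then have "2 \<le> j"
      using \<open>\<And>j. j < 2 \<Longrightarrow> \<not> lexvec ?e k j\<close> not_le by blast
    then show ?thesis
      using even_card_parity_class_column_levinM[OF assms(1) _ that, of c] True
      by (simp add: A_def Int_def conj_commute conj_left_commute)
  qed simp
  have "(\<Sum>t\<in>A. card {j. j < ?e \<and> levinM d t j \<and> lexvec ?e k j})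
      = (\<Sum>t\<in>A. \<Sum>j<?e. of_bool (levinM d t j \<and> lexvec ?e k j) :: nat)"
    by (simp add: lessThan_def Int_def conj_commute)
  also have "\<dots> = (\<Sum>j<?e. \<Sum>t\<in>A. of_bool (levinM d t j \<and> lexvec ?e k j))"
    by (rule sum.swap)
  also have "even \<dots>"
    by (rule dvd_sum) (simp add: column_even)
  finally have "even (\<Sum>t\<in>A. card {j. j < ?e \<and> levinM d t j \<and> lexvec ?e k j})" .
  then show ?thesis
    unfolding levinMw_def by (simp add: even_sum_iff A_def)
qed

lemma not_levinMw_0: "\<not> levinMw d 0 i"
  unfolding levinMw_def lexvec_def by simp

lemma levinMw_1_0: "levinMw d 1 0"
proof -
  have one_div: "Suc 0 div (2 * 2 ^ n) = 0" for n :: nat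
    by (rule div_less) (simp add: Suc_lessI)
  have "lexvec (2 ^ d) 1 j \<longleftrightarrow> j = 2 ^ d - 1" if "j < 2 ^ d" for j
    unfolding lexvec_def using that by (cases "2 ^ d - 1 - j") (auto simp: one_div)
  then have "{j. j < 2 ^ d \<and> levinM d 0 j \<and> lexvec (2 ^ d) 1 j} = {2 ^ d - 1}"
    by (auto simp: levinM_first_row)
  then show ?thesis
    unfolding levinMw_def by simp
qed

lemma frequently_levin_bit: "\<forall>m. \<exists>p\<ge>m. levin_bit p"
proof
  fix m
  have "(1::nat) < 2 ^ 2 ^ m"
    using one_less_power[of "2::nat" "2 ^ m"] by simp
  then have "levin_bit (levin_block_start m + 2 ^ m * 1 + 0)"
    using levin_bit_eq_levinMw[of 1 m 0] levinMw_1_0 by simp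
  then show "\<exists>p\<ge>m. levin_bit p"
    using le_levin_block_start[of m] by (intro exI[of _ "levin_block_start m + 2 ^ m"]) simp
qed

lemma frequently_not_levin_bit: "\<forall>m. \<exists>p\<ge>m. \<not> levin_bit p"
proof
  fix m
  have "\<not> levin_bit (levin_block_start m + 2 ^ m * 0 + 0)"
    using levin_bit_eq_levinMw[of 0 m 0] not_levinMw_0 by simp
  then show "\<exists>p\<ge>m. \<not> levin_bit p"
    using le_levin_block_start[of m] by auto
qed

section \<open>Windows determined by few bits\<close>

lemma bij_betw_add_mod: "bij_betw (\<lambda>i. (s + i) mod e) {..<e} {..<(e::nat)}"
proof -
  have eq: "i = j" if "i \<le> j" "j < e" "(s + i) mod e = (s + j) mod e" for i j
  proof -
    have "e dvd (s + j) - (s + i)"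
      using that mod_eq_dvd_iff_nat[of "s + i" "s + j" e] by simp
    then show ?thesis
      using that by (auto dest: dvd_imp_le)
  qed
  have "inj_on (\<lambda>i. (s + i) mod e) {..<e}"
    by (rule inj_onI) (metis eq lessThan_iff nat_le_linear)
  moreover have "(\<lambda>i. (s + i) mod e) ` {..<e} \<subseteq> {..<e}"
    by auto
  ultimately show ?thesis
    by (simp add: bij_betw_def endo_inj_surj)
qed

lemma card_parity_class_rotate:
  fixes e :: nat
  assumes "even e" and "c < 2"
  shows "card {i. i < e \<and> i mod 2 = c \<and> P ((s + i) mod e)}
       = card {t. t < e \<and> t mod 2 = (c + s) mod 2 \<and> P t}"
proof -
  let ?rot = "\<lambda>i. (s + i) mod e"
  let ?X = "{i. i < e \<and> i mod 2 = c \<and> P (?rot i)}"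
  have rot_image: "?rot ` {..<e} = {..<e}" and rot_inj: "inj_on ?rot {..<e}"
    using bij_betw_add_mod[of s e] by (simp_all add: bij_betw_def)
  have parity: "?rot i mod 2 = (c + s) mod 2 \<longleftrightarrow> i mod 2 = c" for i
  proof -
    have "?rot i mod 2 = (s + i) mod 2"
      using assms(1) by (simp add: mod_mod_cancel)
    moreover have "(s + i) mod 2 = (c + s) mod 2 \<longleftrightarrow> i mod 2 = c"
      using assms(2) by (cases "c = 0") (auto simp: mod2_eq_if)
    ultimately show ?thesis
      by simp
  qed
  have image_eq: "?rot ` ?X = {t. t < e \<and> t mod 2 = (c + s) mod 2 \<and> P t}"
  proof (intro equalityI subsetI)
    fix t assume "t \<in> ?rot ` ?X"
    then obtain i where i: "i < e" "i mod 2 = c" "P (?rot i)" and t: "t = ?rot i"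
      by blast
    then have "t < e"
      by simp
    then show "t \<in> {t. t < e \<and> t mod 2 = (c + s) mod 2 \<and> P t}"
      using i t parity[of i] by simp
  next
    fix t assume t: "t \<in> {t. t < e \<and> t mod 2 = (c + s) mod 2 \<and> P t}"
    then have "t \<in> ?rot ` {..<e}"
      using rot_image by simp
    then obtain i where "i < e" "t = ?rot i"
      by blast
    then show "t \<in> ?rot ` ?X"
      using t parity[of i] by (intro image_eqI[of _ _ i]) simp_all
  qed
  have "inj_on ?rot ?X"
    by (rule inj_on_subset[OF rot_inj]) blast
  then show ?thesis
    unfolding image_eq[symmetric] by (rule card_image[symmetric])
qed

lemma eq_if_even_card_and_eq_off:
  assumes "finite A" and "c \<in> A" and "\<forall>i\<in>A - {c}. P i = Q i"
    and "even (card {i\<in>A. P i})" and "even (card {i\<in>A. Q i})"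
  shows "P c = Q c"
proof (rule ccontr)
  assume "P c \<noteq> Q c"
  then have "{i\<in>A. P i} = insert c {i\<in>A. Q i} \<or> {i\<in>A. Q i} = insert c {i\<in>A. P i}"
    using assms(2,3) by auto
  then show False
    using assms \<open>P c \<noteq> Q c\<close> by (auto simp: card_insert_if)
qed

lemma levin_bit_window:
  assumes "k < 2 ^ (2 ^ d - 2)" and "s \<le> 2 ^ d - d" and "i < 2 ^ d + d"
  shows "levin_bit (levin_block_start (Suc d) + 2 * 2 ^ d * k + s + i) = levinMw d k ((s + i) mod 2 ^ d)"
proof -
  have k: "k < 2 ^ 2 ^ d"
    using assms(1) by (meson diff_le_self less_le_trans one_le_numeral power_increasing)
  moreover have "k < 2 ^ 2 ^ Suc d"
    using k by (rule less_le_trans) (intro power_increasing; simp)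
  moreover have "s + i < 2 * 2 ^ d"
    using assms(2,3) less_exp[of d] by linarith
  ultimately show ?thesis
    using levin_bit_eq_levinMw[of k "Suc d" "s + i"] levinMw_Suc[of k d "s + i"]
    by (simp add: add.assoc)
qed

text \<open>Start positions of the windows of length \<open>2 ^ d + d\<close> lying in the first half of a block
  \<open>k < 2 ^ (2 ^ d - 2)\<close> of \<open>\<lambda>\<^sub>d\<^sub>+\<^sub>1\<close>; such a block is \<open>M\<^sub>d w\<^sub>k\<close> written twice.\<close>

definition levin_windows :: "nat \<Rightarrow> nat set" where
  "levin_windows d = (\<lambda>(k, s). levin_block_start (Suc d) + 2 * 2 ^ d * k + s)
     ` ({..<2 ^ (2 ^ d - 2)} \<times> {..2 ^ d - d})"

lemma levin_window_periodic:
  assumes "a \<in> levin_windows d" and "2 ^ d \<le> i" and "i < 2 ^ d + d"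
  shows "levin_bit (a + i) = levin_bit (a + (i - 2 ^ d))"
proof -
  obtain k s where ks: "k < 2 ^ (2 ^ d - 2)" "s \<le> 2 ^ d - d"
    and a: "a = levin_block_start (Suc d) + 2 * 2 ^ d * k + s"
    using assms(1) unfolding levin_windows_def by auto
  have "(s + i) mod 2 ^ d = (s + (i - 2 ^ d)) mod 2 ^ d"
    using assms(2) by (metis add.assoc le_add_diff_inverse2 mod_add_self2)
  then show ?thesis
    using levin_bit_window[OF ks assms(3)] levin_bit_window[OF ks, of "i - 2 ^ d"] assms(2,3)
    unfolding a by simp
qed

lemma levin_window_even_card_parity_class:
  assumes "1 \<le> d" and "a \<in> levin_windows d" and "c < 2"
  shows "even (card {i. i < 2 ^ d \<and> i mod 2 = c \<and> levin_bit (a + i)})"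
proof -
  obtain k s where ks: "k < 2 ^ (2 ^ d - 2)" "s \<le> 2 ^ d - d"
    and a: "a = levin_block_start (Suc d) + 2 * 2 ^ d * k + s"
    using assms(2) unfolding levin_windows_def by auto
  have "{i. i < 2 ^ d \<and> i mod 2 = c \<and> levin_bit (a + i)}
      = {i. i < 2 ^ d \<and> i mod 2 = c \<and> levinMw d k ((s + i) mod 2 ^ d)}"
    using levin_bit_window[OF ks] unfolding a by (auto simp: add.assoc)
  then show ?thesis
    using card_parity_class_rotate[of "2 ^ d" c "levinMw d k" s] assms(1,3)
      even_card_parity_class_levinMw[OF assms(1) ks(1)]
    by simp
qed

lemma levin_window_eq_if_eq_middle:
  assumes "1 \<le> d" and a: "a \<in> levin_windows d" and b: "b \<in> levin_windows d"
    and middle: "\<forall>i\<in>{2..<2 ^ d}. levin_bit (a + i) = levin_bit (b + i)"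
    and "q < 2 ^ d + d"
  shows "levin_bit (a + q) = levin_bit (b + q)"
proof -
  have first_period: "levin_bit (a + i) = levin_bit (b + i)" if "i < 2 ^ d" for i
  proof (cases "2 \<le> i")
    case False
    let ?A = "{j. j < 2 ^ d \<and> j mod 2 = i}"
    have "i < 2" using False by simp
    have "\<forall>j\<in>?A - {i}. levin_bit (a + j) = levin_bit (b + j)"
      using middle \<open>i < 2\<close> by auto
    moreover have "even (card {j\<in>?A. levin_bit (a + j)})" "even (card {j\<in>?A. levin_bit (b + j)})"
      using levin_window_even_card_parity_class[OF assms(1) _ \<open>i < 2\<close>] a b by simp_all
    ultimately show ?thesis
      using that \<open>i < 2\<close> by (intro eq_if_even_card_and_eq_off[of ?A]) simp_all
  qed (use middle that in auto)
  show ?thesis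
  proof (cases "q < 2 ^ d")
    case False
    then have "q - 2 ^ d < 2 ^ d"
      using assms(5) less_exp[of d] by linarith
    then show ?thesis
      using first_period[OF \<open>q - 2 ^ d < 2 ^ d\<close>] False
        levin_window_periodic[OF a _ assms(5)] levin_window_periodic[OF b _ assms(5)]
      by simp
  qed (rule first_period)
qed

lemma card_levin_windows: "card (levin_windows d) = 2 ^ (2 ^ d - 2) * (2 ^ d - d + 1)"
proof -
  let ?e = "2 ^ d :: nat"
  have "inj_on (\<lambda>(k, s). levin_block_start (Suc d) + 2 * ?e * k + s) ({..<2 ^ (?e - 2)} \<times> {..?e - d})"
  proof (rule inj_onI, clarsimp)
    fix k s k' s' assume s: "s \<le> ?e - d" "s' \<le> ?e - d" and eq: "2 * ?e * k + s = 2 * ?e * k' + s'"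
    have "?e - d < 2 * ?e"
      by (simp add: le_less_trans[of _ ?e])
    then have "s < 2 * ?e" "s' < 2 * ?e"
      using s by linarith+
    then have "(2 * ?e * k + s) div (2 * ?e) = k" "(2 * ?e * k' + s') div (2 * ?e) = k'"
      by simp_all
    then show "k = k' \<and> s = s'"
      using eq by auto
  qed
  then show ?thesis
    unfolding levin_windows_def by (simp add: card_image card_cartesian_product)
qed

lemma power_two_eq_four_mult: "2 \<le> n \<Longrightarrow> (2::nat) ^ n = 4 * 2 ^ (n - 2)"
  by (metis le_add_diff_inverse2 mult.commute power_add power2_eq_square numeral_Bit0 mult_2_right)

lemma levin_windows_subset:
  assumes "1 \<le> d"
  shows "levin_windows d \<subseteq> {1..2 ^ (2 ^ d + d + 1)}"
proof
  let ?e = "2 ^ d :: nat"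
  fix a assume "a \<in> levin_windows d"
  then obtain k s where "k < 2 ^ (?e - 2)" "s \<le> ?e - d"
    and a: "a = levin_block_start (Suc d) + 2 * ?e * k + s"
    unfolding levin_windows_def by auto
  have "4 * 2 ^ (?e - 2) = (2::nat) ^ ?e"
    using assms power_increasing[of 1 d "2::nat"] power_two_eq_four_mult[of ?e] by simp
  then have "4 * (?e * (k + 1)) \<le> ?e * 2 ^ ?e"
    using \<open>k < 2 ^ (?e - 2)\<close> by (metis Suc_eq_plus1 Suc_leI mult.left_commute mult_le_mono2)
  then have "4 * (?e * k) + 4 * ?e \<le> ?e * 2 ^ ?e"
    by (simp add: algebra_simps)
  moreover have "levin_block_start (Suc d) = levin_block_start d + ?e * 2 ^ ?e"
    by (simp add: levin_block_start_def)
  moreover note double_levin_block_start_le[of d] \<open>s \<le> ?e - d\<close>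
  moreover have "(2::nat) ^ (?e + d + 1) = 2 * (?e * 2 ^ ?e)"
    by (simp add: power_add)
  moreover have "a = levin_block_start (Suc d) + 2 * (?e * k) + s"
    unfolding a by simp
  ultimately have "a \<le> 2 ^ (?e + d + 1)"
    by linarith
  moreover have "1 \<le> a"
    using le_levin_block_start[of "Suc d"] unfolding a by simp
  ultimately show "a \<in> {1..2 ^ (?e + d + 1)}"
    by simp
qed

section \<open>Pair correlations\<close>

lemma card_key_collisions_ge:
  fixes key :: "'a \<Rightarrow> 'b"
  assumes "finite S" and "finite T" and "key ` S \<subseteq> T" and "T \<noteq> {}"
  shows "real (card S) ^ 2 / real (card T) - real (card S)
           \<le> real (card {(a, b). a \<in> S \<and> b \<in> S \<and> a \<noteq> b \<and> key a = key b})"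
proof -
  define fibre where "fibre v = card {a\<in>S. key a = v}" for v
  have card_S: "card S = (\<Sum>v\<in>T. fibre v)"
    using sum.group[OF assms(1-3), of "\<lambda>_. 1::nat"] by (simp add: fibre_def)
  let ?D = "{(a, b). a \<in> S \<and> b \<in> S \<and> key a = key b}"
  have "?D = Sigma S (\<lambda>a. {b\<in>S. key b = key a})"
    by auto
  then have "card ?D = (\<Sum>a\<in>S. fibre (key a))"
    using assms(1) by (simp add: fibre_def)
  also have "\<dots> = (\<Sum>v\<in>T. fibre v ^ 2)"
    using sum.group[OF assms(1-3), of "\<lambda>a. fibre (key a)"] by (simp add: fibre_def power2_eq_square)
  finally have card_D: "card ?D = (\<Sum>v\<in>T. fibre v ^ 2)" .
  have "real (card S) ^ 2 \<le> real (card ?D) * real (card T)"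
    unfolding card_S card_D of_nat_sum of_nat_power by (rule sum_squared_le_sum_of_squares)
  then have "real (card S) ^ 2 / real (card T) \<le> real (card ?D)"
    using assms(2,4) by (simp add: divide_le_eq)
  let ?Q = "{(a, b). a \<in> S \<and> b \<in> S \<and> a \<noteq> b \<and> key a = key b}"
  have "finite ?Q"
    by (rule finite_subset[of _ "S \<times> S"]) (auto simp: assms(1))
  moreover have "?Q \<inter> (\<lambda>a. (a, a)) ` S = {}"
    by auto
  moreover have "?D = ?Q \<union> (\<lambda>a. (a, a)) ` S"
    by auto
  ultimately have "card ?D = card ?Q + card ((\<lambda>a. (a, a)) ` S)"
    using card_Un_disjoint[OF _ finite_imageI[OF assms(1)]] by simp
  also have "card ((\<lambda>a. (a, a)) ` S) = card S"
    by (simp add: card_image inj_on_def)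
  finally show ?thesis
    using \<open>real (card S) ^ 2 / real (card T) \<le> real (card ?D)\<close> by simp
qed

definition levin_window_key :: "nat \<Rightarrow> nat \<Rightarrow> nat set" where
  "levin_window_key d a = {i\<in>{2..<2 ^ d}. levin_bit (a + i)}"

lemma card_levin_window_collisions_ge:
  "real (2 ^ (2 ^ d - 2)) * (real (2 ^ d) - real d + 1) * (real (2 ^ d) - real d)
     \<le> real (card {(a, b). a \<in> levin_windows d \<and> b \<in> levin_windows d \<and> a \<noteq> b
                          \<and> levin_window_key d a = levin_window_key d b})"
proof -
  let ?h = "2 ^ (2 ^ d - 2) :: nat"
  let ?S = "levin_windows d"
  let ?T = "Pow {2..<2 ^ d :: nat}"
  have "real (card ?S) = real ?h * real (2 ^ d - d + 1)"
    by (simp only: card_levin_windows of_nat_mult)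
  also have "real (2 ^ d - d + 1) = real (2 ^ d) - real d + 1"
    using less_exp[of d] by simp
  finally have card_S: "real (card ?S) = real ?h * (real (2 ^ d) - real d + 1)" .
  have card_T: "card ?T = ?h"
    by (simp add: card_Pow)
  have "(H * A) ^ 2 / H - H * A = H * A * (A - 1)" if "H > 0" for H A :: real
    using that by (simp add: power2_eq_square field_simps)
  then have "real (card ?S) ^ 2 / real (card ?T) - real (card ?S)
      = real ?h * (real (2 ^ d) - real d + 1) * (real (2 ^ d) - real d)"
    unfolding card_S card_T by simp
  moreover have "real (card ?S) ^ 2 / real (card ?T) - real (card ?S)
      \<le> real (card {(a, b). a \<in> ?S \<and> b \<in> ?S \<and> a \<noteq> b \<and> levin_window_key d a = levin_window_key d b})"
    by (rule card_key_collisions_ge) (auto simp: levin_window_key_def levin_windows_def)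
  ultimately show ?thesis
    by simp
qed

lemma dist_int_levin_windows_less:
  assumes "1 \<le> d" and "a \<in> levin_windows d" and "b \<in> levin_windows d"
    and "levin_window_key d a = levin_window_key d b"
  shows "dist_int (frac_part (2 ^ a * levin) - frac_part (2 ^ b * levin)) < 2 / 2 ^ (2 ^ d + d + 1)"
proof -
  have "\<forall>i\<in>{2..<2 ^ d}. levin_bit (a + i) = levin_bit (b + i)"
    using assms(4) unfolding levin_window_key_def by blast
  then have "\<forall>q<2 ^ d + d. levin_bit (a + q) = levin_bit (b + q)"
    using levin_window_eq_if_eq_middle[OF assms(1-3)] by blast
  then have "dist_int (frac_part (2 ^ a * levin) - frac_part (2 ^ b * levin)) < 1 / 2 ^ (2 ^ d + d)"
    unfolding levin_eq_bin_value
    by (rule dist_int_frac_part_less_if_prefix[OF frequently_levin_bit frequently_not_levin_bit])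
  then show ?thesis
    by simp
qed

lemma pair_corr_levin_ge:
  assumes "1 \<le> d"
  shows "(real (2 ^ d) - real d + 1) * (real (2 ^ d) - real d) / (8 * real (2 ^ d))
           \<le> pair_corr (\<lambda>n. frac_part (2 ^ n * levin)) (2 ^ (2 ^ d + d + 1)) 2"
proof -
  let ?x = "\<lambda>n. frac_part (2 ^ n * levin)"
  let ?e = "2 ^ d :: nat"
  let ?h = "2 ^ (?e - 2) :: nat"
  let ?N = "2 ^ (?e + d + 1) :: nat"
  let ?collisions = "{(a, b). a \<in> levin_windows d \<and> b \<in> levin_windows d \<and> a \<noteq> b
                              \<and> levin_window_key d a = levin_window_key d b}"
  let ?close = "{(i, j). i \<in> {1..?N} \<and> j \<in> {1..?N} \<and> i \<noteq> j \<and> dist_int (?x i - ?x j) < 2 / real ?N}"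
  have "?collisions \<subseteq> ?close"
    using dist_int_levin_windows_less[OF assms] levin_windows_subset[OF assms] by fastforce
  then have "real (card ?collisions) \<le> real (card ?close)"
    by (intro of_nat_mono card_mono) (auto intro: finite_subset[of _ "{1..?N} \<times> {1..?N}"])
  then have close_ge: "real ?h * (real ?e - real d + 1) * (real ?e - real d) \<le> real (card ?close)"
    using card_levin_window_collisions_ge[of d] by linarith
  have "?N = 2 * ?e * 2 ^ ?e"
    by (simp add: power_add)
  then have N_eq: "real ?N = 8 * real ?h * real ?e"
    using assms power_increasing[of 1 d "2::nat"] power_two_eq_four_mult[of ?e] by simp
  have "(real ?e - real d + 1) * (real ?e - real d) / (8 * real ?e)
      = real ?h * (real ?e - real d + 1) * (real ?e - real d) / real ?N"
    unfolding N_eq by simp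
  also have "\<dots> \<le> real (card ?close) / real ?N"
    using close_ge by (rule divide_right_mono) simp
  also have "\<dots> = pair_corr ?x ?N 2"
    unfolding pair_corr_def by simp
  finally show ?thesis .
qed

lemma double_le_power_two: "2 * n \<le> (2::nat) ^ n"
proof (induction n)
  case (Suc n)
  then show ?case
    using one_le_power[of "2::nat" n] by (cases n) auto
qed simp

lemma levin_bound_ge_linear:
  "real d / 16 \<le> (real (2 ^ d) - real d + 1) * (real (2 ^ d) - real d) / (8 * real (2 ^ d))"
proof -
  define e where "e = real ((2::nat) ^ d)"
  have "2 * real d \<le> e"
    unfolding e_def using double_le_power_two[of d] by (metis of_nat_le_iff of_nat_mult of_nat_numeral)
  moreover have "0 < e"
    unfolding e_def by simp
  ultimately have "(e / 2) * (e / 2) \<le> (e - real d + 1) * (e - real d)"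
    by (intro mult_mono) auto
  then have "e / 32 \<le> (e - real d + 1) * (e - real d) / (8 * e)"
    using \<open>0 < e\<close> by (simp add: field_simps)
  then show ?thesis
    using \<open>2 * real d \<le> e\<close> unfolding e_def by linarith
qed

lemma not_poissonian_pc_if_unbounded:
  assumes "strict_mono r" and "filterlim (\<lambda>k. pair_corr x (r k) s) at_top sequentially" and "0 \<le> s"
  shows "\<not> poissonian_pc x"
proof
  assume "poissonian_pc x"
  then have "(\<lambda>N. pair_corr x N s) \<longlonglongrightarrow> 2 * s"
    using assms(3) unfolding poissonian_pc_def by blast
  then have "(\<lambda>k. pair_corr x (r k) s) \<longlonglongrightarrow> 2 * s"
    using filterlim_compose filterlim_subseq[OF assms(1)] by blast
  then show False
    using not_tendsto_and_filterlim_at_infinity[OF sequentially_bot]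
      filterlim_at_top_imp_at_infinity[OF assms(2)] by blast
qed

theorem mainTheorem8:
  fixes x :: "nat \<Rightarrow> real"
  defines "x \<equiv> (\<lambda>n. frac_part (2 ^ n * levin))"
  shows "(\<forall>d::nat. d \<ge> 1 \<longrightarrow>
            pair_corr x (2 ^ (2 ^ d + d + 1)) 2
              \<ge> (real (2 ^ d) - real d + 1) * (real (2 ^ d) - real d) / (8 * real (2 ^ d)))
         \<and> filterlim (\<lambda>d. pair_corr x (2 ^ (2 ^ d + d + 1)) 2) at_top sequentially
         \<and> \<not> poissonian_pc x"
proof (intro conjI)
  show bound: "\<forall>d::nat. d \<ge> 1 \<longrightarrow>
      pair_corr x (2 ^ (2 ^ d + d + 1)) 2
        \<ge> (real (2 ^ d) - real d + 1) * (real (2 ^ d) - real d) / (8 * real (2 ^ d))"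
    unfolding x_def using pair_corr_levin_ge by blast
  have "filterlim (\<lambda>d. 1 / 16 * real d) at_top sequentially"
    by (rule filterlim_tendsto_pos_mult_at_top[OF tendsto_const _ filterlim_real_sequentially]) simp
  moreover have "\<forall>\<^sub>F d in sequentially. 1 / 16 * real d \<le> pair_corr x (2 ^ (2 ^ d + d + 1)) 2"
  proof (rule eventually_sequentiallyI)
    fix d :: nat assume "1 \<le> d"
    then show "1 / 16 * real d \<le> pair_corr x (2 ^ (2 ^ d + d + 1)) 2"
      using levin_bound_ge_linear[of d] bound[rule_format, OF \<open>1 \<le> d\<close>] by linarith
  qed
  ultimately show unbounded: "filterlim (\<lambda>d. pair_corr x (2 ^ (2 ^ d + d + 1)) 2) at_top sequentially"
    by (rule filterlim_at_top_mono)
  have "strict_mono (\<lambda>d. 2 ^ (2 ^ d + d + 1) :: nat)"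
    unfolding strict_mono_Suc_iff by (intro allI power_strict_increasing) simp_all
  then show "\<not> poissonian_pc x"
    using unbounded by (rule not_poissonian_pc_if_unbounded) simp
qed

end
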